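(* Fix an odd prime $p$. There are constants $c_p>0$ and $r_0(p)<\infty$ such that, for every $h=2m\ge2$ and every $r\ge\max\{h+1,r_0(p)\}$, the half-lazy PA-PRA walk $Q$ on $V_r(\mathsf H)$ (with $\dim W=h$) satisfies \[ \tau_{\mathrm{mix}}(Q)\ge c_p\max\left\{r\log r,\ \frac{r(h+1)}{\log(er)}\right\}. \]
   Context: Let $p$ be an odd prime, $W$ a vector space of dimension $h=2m$ over $\mathbb F_p$ with a nondegenerate alternating bilinear form $\omega$. The Heisenberg group $\mathsf H=W\times\mathbb F_p$ has multiplication $(v,z)(w,t)=(v+w,\,z+t+\tfrac12\omega(v,w))$, where $\tfrac12$ is the inverse of $2$ in $\mathbb F_p$. Let $V_r(\mathsf H)=\{(g_1,\dots,g_r)\in\mathsf H^r:\langle g_1,\dots,g_r\rangle=\mathsf H\}$ and $\pi$ the uniform measure on it. For distinct $i,j\in[r]$ and $a\in\mathbb F_p$, $T^R_{j\to i,a}$ replaces $g_i$ by $g_ig_j^a$ and $T^L_{j\to i,a}$ replaces $g_i$ by $g_j^ag_i$. The PA-PRA kernel is $Pf(g)=\frac1{2pr(r-1)}\sum_{i\ne j}\sum_{a\in\mathbb F_p}[f(T^R_{j\to i,a}g)+f(T^L_{j\to i,a}g)]$ and $Q=\frac12(I+P)$. $\tau_{\mathrm{mix}}(Q)=\min\{t\ge0:\max_x\|Q^t(x,\cdot)-\pi\|_{\mathrm{TV}}\le1/4\}$. *)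

theory Defs
  imports Complex_Main "HOL-Library.Extended_Real" "HOL-Computational_Algebra.Primes"
begin

text \<open>The vector space W = F_p^h, realised as integer-valued functions on nat
  with coordinates in {0..<p} below h and 0 from h on.\<close>

definition Wvec :: "nat \<Rightarrow> nat \<Rightarrow> (nat \<Rightarrow> int) set" where
  "Wvec p h = {v. (\<forall>i<h. 0 \<le> v i \<and> v i < int p) \<and> (\<forall>i\<ge>h. v i = 0)}"

definition vadd :: "nat \<Rightarrow> (nat \<Rightarrow> int) \<Rightarrow> (nat \<Rightarrow> int) \<Rightarrow> (nat \<Rightarrow> int)" where
  "vadd p v w = (\<lambda>i. (v i + w i) mod int p)"

text \<open>A nondegenerate alternating bilinear form on W with values in F_p = {0..<p}.
  (Biadditivity over the prime field F_p is the same as F_p-bilinearity.)\<close>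

definition symplectic_form ::
  "nat \<Rightarrow> nat \<Rightarrow> ((nat \<Rightarrow> int) \<Rightarrow> (nat \<Rightarrow> int) \<Rightarrow> int) \<Rightarrow> bool" where
  "symplectic_form p h \<omega> \<longleftrightarrow>
     (\<forall>v\<in>Wvec p h. \<forall>w\<in>Wvec p h. 0 \<le> \<omega> v w \<and> \<omega> v w < int p) \<and>
     (\<forall>u\<in>Wvec p h. \<forall>v\<in>Wvec p h. \<forall>w\<in>Wvec p h.
        \<omega> (vadd p u v) w = (\<omega> u w + \<omega> v w) mod int p \<and>
        \<omega> w (vadd p u v) = (\<omega> w u + \<omega> w v) mod int p) \<and>
     (\<forall>v\<in>Wvec p h. \<omega> v v = 0) \<and>
     (\<forall>v\<in>Wvec p h. v \<noteq> (\<lambda>_. 0) \<longrightarrow> (\<exists>w\<in>Wvec p h. \<omega> v w \<noteq> 0))"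

type_synonym helem = "(nat \<Rightarrow> int) \<times> int"

definition Hset :: "nat \<Rightarrow> nat \<Rightarrow> helem set" where
  "Hset p h = Wvec p h \<times> {0..<int p}"

definition hone :: helem where
  "hone = ((\<lambda>_. 0), 0)"

text \<open>(v,z)(w,t) = (v+w, z+t+ (1/2) omega(v,w)), where 1/2 = (p+1)/2 in F_p.\<close>
definition hmul ::
  "nat \<Rightarrow> ((nat \<Rightarrow> int) \<Rightarrow> (nat \<Rightarrow> int) \<Rightarrow> int) \<Rightarrow> helem \<Rightarrow> helem \<Rightarrow> helem" where
  "hmul p \<omega> g g' = (case g of (v, z) \<Rightarrow> case g' of (w, t) \<Rightarrow>
      (vadd p v w, (z + t + ((int p + 1) div 2) * \<omega> v w) mod int p))"

definition hpow ::
  "nat \<Rightarrow> ((nat \<Rightarrow> int) \<Rightarrow> (nat \<Rightarrow> int) \<Rightarrow> int) \<Rightarrow> helem \<Rightarrow> nat \<Rightarrow> helem" where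
  "hpow p \<omega> g a = (hmul p \<omega> g ^^ a) hone"

text \<open>Subgroup generated by S (in a finite group the generated submonoid is the
  generated subgroup).\<close>
inductive_set hgen ::
  "nat \<Rightarrow> ((nat \<Rightarrow> int) \<Rightarrow> (nat \<Rightarrow> int) \<Rightarrow> int) \<Rightarrow> helem set \<Rightarrow> helem set"
  for p \<omega> S where
  one: "hone \<in> hgen p \<omega> S"
| step: "x \<in> hgen p \<omega> S \<Longrightarrow> s \<in> S \<Longrightarrow> hmul p \<omega> x s \<in> hgen p \<omega> S"

text \<open>V_r(H): generating r-tuples, indexed by {0..<r} (default hone outside).\<close>
definition Vr ::
  "nat \<Rightarrow> nat \<Rightarrow> ((nat \<Rightarrow> int) \<Rightarrow> (nat \<Rightarrow> int) \<Rightarrow> int) \<Rightarrow> nat \<Rightarrow> (nat \<Rightarrow> helem) set" where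
  "Vr p h \<omega> r = {g. (\<forall>i<r. g i \<in> Hset p h) \<and> (\<forall>i\<ge>r. g i = hone) \<and>
                     hgen p \<omega> (g ` {..<r}) = Hset p h}"

definition TR ::
  "nat \<Rightarrow> ((nat \<Rightarrow> int) \<Rightarrow> (nat \<Rightarrow> int) \<Rightarrow> int) \<Rightarrow> nat \<Rightarrow> nat \<Rightarrow> nat \<Rightarrow> (nat \<Rightarrow> helem) \<Rightarrow> (nat \<Rightarrow> helem)" where
  "TR p \<omega> j i a g = g(i := hmul p \<omega> (g i) (hpow p \<omega> (g j) a))"

definition TL ::
  "nat \<Rightarrow> ((nat \<Rightarrow> int) \<Rightarrow> (nat \<Rightarrow> int) \<Rightarrow> int) \<Rightarrow> nat \<Rightarrow> nat \<Rightarrow> nat \<Rightarrow> (nat \<Rightarrow> helem) \<Rightarrow> (nat \<Rightarrow> helem)" where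
  "TL p \<omega> j i a g = g(i := hmul p \<omega> (hpow p \<omega> (g j) a) (g i))"

definition Pker ::
  "nat \<Rightarrow> ((nat \<Rightarrow> int) \<Rightarrow> (nat \<Rightarrow> int) \<Rightarrow> int) \<Rightarrow> nat \<Rightarrow> (nat \<Rightarrow> helem) \<Rightarrow> (nat \<Rightarrow> helem) \<Rightarrow> real" where
  "Pker p \<omega> r x y =
     (real (card {(i, j, a). i < r \<and> j < r \<and> i \<noteq> j \<and> a < p \<and> TR p \<omega> j i a x = y})
    + real (card {(i, j, a). i < r \<and> j < r \<and> i \<noteq> j \<and> a < p \<and> TL p \<omega> j i a x = y}))
     / (2 * real p * real r * (real r - 1))"

definition Qker ::
  "nat \<Rightarrow> ((nat \<Rightarrow> int) \<Rightarrow> (nat \<Rightarrow> int) \<Rightarrow> int) \<Rightarrow> nat \<Rightarrow> (nat \<Rightarrow> helem) \<Rightarrow> (nat \<Rightarrow> helem) \<Rightarrow> real" where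
  "Qker p \<omega> r x y = ((if x = y then 1 else 0) + Pker p \<omega> r x y) / 2"

fun Qpow ::
  "nat \<Rightarrow> nat \<Rightarrow> ((nat \<Rightarrow> int) \<Rightarrow> (nat \<Rightarrow> int) \<Rightarrow> int) \<Rightarrow> nat \<Rightarrow> nat \<Rightarrow> (nat \<Rightarrow> helem) \<Rightarrow> (nat \<Rightarrow> helem) \<Rightarrow> real" where
  "Qpow p h \<omega> r 0 x y = (if x = y then 1 else 0)"
| "Qpow p h \<omega> r (Suc t) x y = (\<Sum>z\<in>Vr p h \<omega> r. Qpow p h \<omega> r t x z * Qker p \<omega> r z y)"

definition tv_dist ::
  "nat \<Rightarrow> nat \<Rightarrow> ((nat \<Rightarrow> int) \<Rightarrow> (nat \<Rightarrow> int) \<Rightarrow> int) \<Rightarrow> nat \<Rightarrow> nat \<Rightarrow> (nat \<Rightarrow> helem) \<Rightarrow> real" where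
  "tv_dist p h \<omega> r t x =
     (1/2) * (\<Sum>y\<in>Vr p h \<omega> r. \<bar>Qpow p h \<omega> r t x y - 1 / real (card (Vr p h \<omega> r))\<bar>)"

text \<open>Mixing time (infinity if the set is empty).\<close>
definition mix_time ::
  "nat \<Rightarrow> nat \<Rightarrow> ((nat \<Rightarrow> int) \<Rightarrow> (nat \<Rightarrow> int) \<Rightarrow> int) \<Rightarrow> nat \<Rightarrow> ereal" where
  "mix_time p h \<omega> r =
     Inf {ereal (real t) | t. \<forall>x\<in>Vr p h \<omega> r. tv_dist p h \<omega> r t x \<le> 1/4}"

end

theory Submission
  imports Defs "HOL-Library.FuncSet"
begin

(* Both bounds are read off from the tuple x0 = (e_1, ..., e_h, z, 1, ..., 1) of standard
   generators of H padded with identities.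

   Counting: one step of Q leads to one of at most 1 + 2 r^2 p tuples, so after t steps the
   walk from x0 is confined to (1 + 2 r^2 p)^t tuples. But V_r contains every tuple whose
   first h entries have vector parts in echelon form with unit pivots, followed by the
   central generator and arbitrary entries: at least p^((h+1)(r-1)/2) tuples. Hence the walk
   is far from uniform while t is below order r (h+1) / log (e r).

   Infection: T_{j->i,a} can make entry i nontrivial only if g_j is nontrivial, so the
   expected number of nontrivial entries grows at most by the factor 1 + 1/(2(r-1)) per step
   of Q. Up to time of order r log r it therefore stays below r/2 with probability 3/4 by
   Markov's inequality, whereas tuples with at most r/2 nontrivial entries make up less than
   a quarter of V_r. This needs (h+1)^2 <= r; for larger h the counting bound dominates
   r log r anyway. *)

definition tuples :: "nat \<Rightarrow> (nat \<Rightarrow> 'a set) \<Rightarrow> 'a \<Rightarrow> (nat \<Rightarrow> 'a) set" where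
  "tuples n A d = {f. (\<forall>i<n. f i \<in> A i) \<and> (\<forall>i\<ge>n. f i = d)}"

lemma tuples_eq_image_PiE:
  "tuples n A d = (\<lambda>g i. if i < n then g i else d) ` PiE {..<n} A"
proof (intro set_eqI iffI)
  fix f assume f: "f \<in> tuples n A d"
  have "f = (\<lambda>g i. if i < n then g i else d) (restrict f {..<n})"
  proof
    fix i show "f i = (\<lambda>g i. if i < n then g i else d) (restrict f {..<n}) i"
      using f by (simp add: tuples_def)
  qed
  moreover have "restrict f {..<n} \<in> PiE {..<n} A"
    using f by (simp add: tuples_def)
  ultimately show "f \<in> (\<lambda>g i. if i < n then g i else d) ` PiE {..<n} A"
    by (rule image_eqI)
next
  fix f assume "f \<in> (\<lambda>g i. if i < n then g i else d) ` PiE {..<n} A"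
  then obtain g where "g \<in> PiE {..<n} A" "f = (\<lambda>i. if i < n then g i else d)"
    by blast
  then show "f \<in> tuples n A d"
    by (simp add: tuples_def PiE_mem)
qed

lemma finite_tuples: "(\<And>i. i < n \<Longrightarrow> finite (A i)) \<Longrightarrow> finite (tuples n A d)"
  unfolding tuples_eq_image_PiE by (intro finite_imageI finite_PiE) auto

lemma card_tuples: "card (tuples n A d) = (\<Prod>i<n. card (A i))"
proof -
  have "inj_on (\<lambda>g i. if i < n then g i else d) (PiE {..<n} A)"
  proof (rule inj_onI)
    fix g g' assume g: "g \<in> PiE {..<n} A" "g' \<in> PiE {..<n} A"
      and eq: "(\<lambda>i. if i < n then g i else d) = (\<lambda>i. if i < n then g' i else d)"
    show "g = g'"
    proof (rule PiE_ext[OF g])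
      fix i assume "i \<in> {..<n}"
      then show "g i = g' i" using fun_cong[OF eq, of i] by simp
    qed
  qed
  then show ?thesis
    unfolding tuples_eq_image_PiE by (simp add: card_image card_PiE)
qed

lemma Wvec_eq_tuples: "Wvec p h = tuples h (\<lambda>_. {0..<int p}) 0"
  by (auto simp: Wvec_def tuples_def)

lemma finite_Hset: "finite (Hset p h)"
  by (simp add: Hset_def Wvec_eq_tuples finite_tuples)

lemma card_Hset: "card (Hset p h) = p ^ (h + 1)"
  by (simp add: Hset_def Wvec_eq_tuples card_tuples card_cartesian_product)

lemma finite_Vr: "finite (Vr p h \<omega> r)"
proof (rule finite_subset)
  show "Vr p h \<omega> r \<subseteq> tuples r (\<lambda>_. Hset p h) hone"
    by (auto simp: Vr_def tuples_def)
qed (simp add: finite_tuples finite_Hset)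

lemma int_eq_double_mod_imp_zero:
  fixes x n :: int
  assumes "0 \<le> x" "x < n" "x = (x + x) mod n"
  shows "x = 0"
proof -
  have x: "x mod n = x"
    using assms(1,2) by simp
  then have "(x + x) mod n = x mod n"
    using assms(3) by simp
  then have "(x + x - x) mod n = (x - x) mod n"
    by (rule mod_diff_cong) (rule refl)
  with x show ?thesis
    by simp
qed

locale heisenberg =
  fixes p h :: nat and \<omega> :: "(nat \<Rightarrow> int) \<Rightarrow> (nat \<Rightarrow> int) \<Rightarrow> int"
  assumes prime: "prime p" and odd: "odd p" and symplectic: "symplectic_form p h \<omega>"
begin

lemma p_ge_3: "3 \<le> p"
proof -
  have "2 \<le> p" "p \<noteq> 2"
    using prime prime_ge_2_nat odd by auto
  then show ?thesis by linarith
qed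

lemma p_pos: "0 < p"
  using p_ge_3 by simp

lemma zero_in_Wvec: "(\<lambda>_. 0) \<in> Wvec p h"
  using p_pos by (simp add: Wvec_def)

lemma Wvec_mod: "v \<in> Wvec p h \<Longrightarrow> v i mod int p = v i"
  by (cases "i < h") (auto simp: Wvec_def)

lemma vadd_closed: "v \<in> Wvec p h \<Longrightarrow> w \<in> Wvec p h \<Longrightarrow> vadd p v w \<in> Wvec p h"
  using p_pos by (auto simp: Wvec_def vadd_def)

lemma vadd_zero:
  assumes "v \<in> Wvec p h"
  shows "vadd p v (\<lambda>_. 0) = v" "vadd p (\<lambda>_. 0) v = v"
  using Wvec_mod[OF assms] by (auto simp: vadd_def)

lemma omega_zero:
  assumes v: "v \<in> Wvec p h"
  shows "\<omega> v (\<lambda>_. 0) = 0" "\<omega> (\<lambda>_. 0) v = 0"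
proof -
  have zero: "vadd p (\<lambda>_. 0) (\<lambda>_. 0) = (\<lambda>_. 0)"
    using vadd_zero zero_in_Wvec by blast
  have "\<omega> (vadd p (\<lambda>_. 0) (\<lambda>_. 0)) v = (\<omega> (\<lambda>_. 0) v + \<omega> (\<lambda>_. 0) v) mod int p"
       "\<omega> v (vadd p (\<lambda>_. 0) (\<lambda>_. 0)) = (\<omega> v (\<lambda>_. 0) + \<omega> v (\<lambda>_. 0)) mod int p"
       "0 \<le> \<omega> (\<lambda>_. 0) v" "\<omega> (\<lambda>_. 0) v < int p" "0 \<le> \<omega> v (\<lambda>_. 0)" "\<omega> v (\<lambda>_. 0) < int p"
    using symplectic v zero_in_Wvec unfolding symplectic_form_def by blast+
  note facts = this[unfolded zero]
  show "\<omega> v (\<lambda>_. 0) = 0"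
    by (rule int_eq_double_mod_imp_zero[of _ "int p"]) (use facts in simp_all)
  show "\<omega> (\<lambda>_. 0) v = 0"
    by (rule int_eq_double_mod_imp_zero[of _ "int p"]) (use facts in simp_all)
qed

lemma hone_in_Hset: "hone \<in> Hset p h"
  using p_pos zero_in_Wvec by (simp add: hone_def Hset_def)

lemma hmul_closed: "g \<in> Hset p h \<Longrightarrow> g' \<in> Hset p h \<Longrightarrow> hmul p \<omega> g g' \<in> Hset p h"
  using p_pos vadd_closed by (auto simp: Hset_def hmul_def split: prod.splits)

lemma hmul_hone:
  assumes "g \<in> Hset p h"
  shows "hmul p \<omega> g hone = g" "hmul p \<omega> hone g = g"
proof -
  obtain v z where g: "g = (v, z)" "v \<in> Wvec p h" "0 \<le> z" "z < int p"
    using assms by (auto simp: Hset_def)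
  then show "hmul p \<omega> g hone = g" "hmul p \<omega> hone g = g"
    using omega_zero[OF g(2)] vadd_zero[OF g(2)] by (simp_all add: hmul_def hone_def)
qed

lemma hpow_hone: "hpow p \<omega> hone a = hone"
  by (induction a) (simp_all add: hpow_def hmul_hone hone_in_Hset)

end

section \<open>Echelon tuples generate the group\<close>

definition echelon_vecs :: "nat \<Rightarrow> nat \<Rightarrow> nat \<Rightarrow> (nat \<Rightarrow> int) set" where
  "echelon_vecs p h k =
     tuples h (\<lambda>i. if i < k then {0} else if i = k then {1} else {0..<int p}) 0"

definition echelon_slot :: "nat \<Rightarrow> nat \<Rightarrow> nat \<Rightarrow> helem set" where
  "echelon_slot p h i =
     (if i < h then echelon_vecs p h i \<times> {0..<int p}
      else if i = h then {((\<lambda>_. 0), 1)} else Hset p h)"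

definition echelon_dim :: "nat \<Rightarrow> nat \<Rightarrow> nat" where
  "echelon_dim h i = (if i < h then h - i else if i = h then 0 else h + 1)"

definition standard_tuple :: "nat \<Rightarrow> nat \<Rightarrow> helem" where
  "standard_tuple h i =
     (if i < h then ((\<lambda>l. if l = i then 1 else 0), 0)
      else if i = h then ((\<lambda>_. 0), 1) else hone)"

lemma card_echelon_vecs:
  assumes "k < h"
  shows "card (echelon_vecs p h k) = p ^ (h - Suc k)"
proof -
  have "card (echelon_vecs p h k) = (\<Prod>i<h. if k < i then p else 1)"
    unfolding echelon_vecs_def card_tuples by (rule prod.cong) auto
  also have "\<dots> = p ^ card ({..<h} \<inter> {i. k < i})"
    by (simp add: prod.If_cases)
  also have "{..<h} \<inter> {i. k < i} = {k<..<h}"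
    by auto
  finally show ?thesis by simp
qed

lemma card_echelon_slot: "card (echelon_slot p h i) = p ^ echelon_dim h i"
proof -
  consider "i < h" | "i = h" | "h < i"
    by linarith
  then show ?thesis
  proof cases
    case 1
    then have "h - i = Suc (h - Suc i)"
      by simp
    with 1 show ?thesis
      by (simp add: echelon_slot_def echelon_dim_def card_cartesian_product card_echelon_vecs
          mult.commute)
  qed (simp_all add: echelon_slot_def echelon_dim_def card_Hset)
qed

lemma card_echelon_tuples: "card (tuples r (echelon_slot p h) hone) = p ^ (\<Sum>i<r. echelon_dim h i)"
  by (simp add: card_tuples card_echelon_slot power_sum)

lemma double_sum_lessThan_diff: "2 * (\<Sum>i<n. n - i) = n * (n + 1 :: nat)"
proof (induction n)
  case (Suc n)
  have "(\<Sum>i<n. Suc n - i) = (\<Sum>i<n. (n - i) + 1)"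
    by (rule sum.cong) auto
  also have "\<dots> = (\<Sum>i<n. n - i) + n"
    by (simp only: sum.distrib) simp
  finally have "(\<Sum>i<Suc n. Suc n - i) = (\<Sum>i<n. n - i) + n + 1"
    by simp
  with Suc.IH show ?case
    by simp
qed simp

lemma double_sum_echelon_dim:
  assumes "h < r"
  shows "2 * (\<Sum>i<r. echelon_dim h i) = (h + 1) * (2 * r - h - 2)"
  using assms
proof (induction r)
  case (Suc r)
  show ?case
  proof (cases "r = h")
    case True
    have "(\<Sum>i<r. echelon_dim h i) = (\<Sum>i<h. h - i)"
      using True by (auto simp: echelon_dim_def intro: sum.cong)
    then show ?thesis
      using True double_sum_lessThan_diff[of h] by (simp add: echelon_dim_def)
  next
    case False
    then have "h < r" "2 * Suc r - h - 2 = (2 * r - h - 2) + 2"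
      using Suc.prems by simp_all
    then show ?thesis
      using Suc.IH by (simp add: echelon_dim_def algebra_simps)
  qed
qed simp

lemma sum_echelon_dim_ge:
  assumes "h < r"
  shows "(h + 1) * (r - h - 1) \<le> (\<Sum>i<r. echelon_dim h i)"
    and "(h + 1) * (r - 1) \<le> 2 * (\<Sum>i<r. echelon_dim h i)"
proof -
  have "(h + 1) * (2 * (r - h - 1)) \<le> (h + 1) * (2 * r - h - 2)"
    by (rule mult_le_mono2) linarith
  then show "(h + 1) * (r - h - 1) \<le> (\<Sum>i<r. echelon_dim h i)"
    using double_sum_echelon_dim[OF assms] by linarith
  have "(h + 1) * (r - 1) \<le> (h + 1) * (2 * r - h - 2)"
    using assms by (intro mult_le_mono2) linarith
  then show "(h + 1) * (r - 1) \<le> 2 * (\<Sum>i<r. echelon_dim h i)"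
    using double_sum_echelon_dim[OF assms] by linarith
qed

context heisenberg
begin

lemma hgen_subset_Hset:
  assumes "S \<subseteq> Hset p h"
  shows "hgen p \<omega> S \<subseteq> Hset p h"
proof
  fix x assume "x \<in> hgen p \<omega> S"
  then show "x \<in> Hset p h"
    by (induction rule: hgen.induct) (use assms hone_in_Hset hmul_closed in auto)
qed

lemma hgen_add_multiple:
  assumes S: "S \<subseteq> Hset p h" and u: "(u, s) \<in> hgen p \<omega> S" and w: "(w, y) \<in> S"
  shows "\<exists>s'. ((\<lambda>i. (u i + int n * w i) mod int p), s') \<in> hgen p \<omega> S"
proof (induction n)
  case 0
  have "u \<in> Wvec p h"
    using hgen_subset_Hset[OF S] u by (auto simp: Hset_def)
  then have "(\<lambda>i. (u i + int 0 * w i) mod int p) = u"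
    using Wvec_mod by auto
  then show ?case
    using u by auto
next
  case (Suc n)
  then obtain s' where s': "((\<lambda>i. (u i + int n * w i) mod int p), s') \<in> hgen p \<omega> S"
    by blast
  have "vadd p (\<lambda>i. (u i + int n * w i) mod int p) w = (\<lambda>i. (u i + int (Suc n) * w i) mod int p)"
  proof
    fix i
    have "((u i + int n * w i) mod int p + w i) mod int p = (u i + int n * w i + w i) mod int p"
      by (rule mod_add_left_eq)
    then show "vadd p (\<lambda>i. (u i + int n * w i) mod int p) w i = (u i + int (Suc n) * w i) mod int p"
      by (simp add: vadd_def algebra_simps)
  qed
  then show ?case
    using hgen.step[OF s' w] by (auto simp: hmul_def)
qed

lemma hgen_shift_center:
  assumes S: "S \<subseteq> Hset p h" and center: "((\<lambda>_. 0), 1) \<in> S" and v: "(v, s) \<in> hgen p \<omega> S"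
    and z: "0 \<le> z" "z < int p"
  shows "(v, z) \<in> hgen p \<omega> S"
proof -
  have v_W: "v \<in> Wvec p h" and s: "0 \<le> s" "s < int p"
    using hgen_subset_Hset[OF S] v by (auto simp: Hset_def)
  have shifted: "(v, (s + int n) mod int p) \<in> hgen p \<omega> S" for n
  proof (induction n)
    case 0
    then show ?case
      using v s by simp
  next
    case (Suc n)
    have "((s + int n) mod int p + 1) mod int p = (s + int n + 1) mod int p"
      by (rule mod_add_left_eq)
    then have "hmul p \<omega> (v, (s + int n) mod int p) ((\<lambda>_. 0), 1) = (v, (s + int (Suc n)) mod int p)"
      using omega_zero[OF v_W] vadd_zero[OF v_W] by (simp add: hmul_def algebra_simps)
    then show ?case
      using hgen.step[OF Suc center] by simp
  qed
  have "(s + int (nat ((z - s) mod int p))) mod int p = z"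
    using z p_pos by (simp add: mod_add_right_eq)
  then show ?thesis
    using shifted[of "nat ((z - s) mod int p)"] by simp
qed

lemma hgen_vectors:
  assumes S: "S \<subseteq> Hset p h"
    and echelon: "\<And>k. k < h \<Longrightarrow> \<exists>w y. (w, y) \<in> S \<and> w k = 1 \<and> (\<forall>l<k. w l = 0)"
    and v: "v \<in> Wvec p h"
  shows "\<exists>s. (v, s) \<in> hgen p \<omega> S"
proof -
  have "\<forall>v\<in>Wvec p h. (\<forall>l<k. v l = 0) \<longrightarrow> (\<exists>s. (v, s) \<in> hgen p \<omega> S)" if "k \<le> h" for k
    using that
  proof (induction k rule: inc_induct)
    case base
    show ?case
    proof (intro ballI impI)
      fix v assume v: "v \<in> Wvec p h" "\<forall>l<h. v l = 0"
      have "v = (\<lambda>_. 0)"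
      proof
        fix l show "v l = 0"
          using v by (cases "l < h") (auto simp: Wvec_def)
      qed
      then have "(v, 0) = hone"
        by (simp add: hone_def)
      then show "\<exists>s. (v, s) \<in> hgen p \<omega> S"
        using hgen.one by metis
    qed
  next
    case (step k)
    obtain w y where wy: "(w, y) \<in> S" "w k = 1" "\<forall>l<k. w l = 0"
      using echelon step.hyps by blast
    have w: "w \<in> Wvec p h"
      using S wy by (auto simp: Hset_def)
    show ?case
    proof (intro ballI impI)
      fix v assume v: "v \<in> Wvec p h" "\<forall>l<k. v l = 0"
      define a where "a = v k"
      define v' where "v' = (\<lambda>i. (v i - a * w i) mod int p)"
      have a: "0 \<le> a"
        using v step.hyps by (auto simp: Wvec_def a_def)
      have "v' \<in> Wvec p h"
        using v w p_pos by (auto simp: Wvec_def v'_def)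
      moreover have "\<forall>l<Suc k. v' l = 0"
        using v wy by (auto simp: v'_def a_def less_Suc_eq)
      ultimately obtain s where "(v', s) \<in> hgen p \<omega> S"
        using step.IH by blast
      then obtain s' where "((\<lambda>i. (v' i + int (nat a) * w i) mod int p), s') \<in> hgen p \<omega> S"
        using hgen_add_multiple[OF S _ wy(1)] by blast
      moreover have "(\<lambda>i. (v' i + int (nat a) * w i) mod int p) = v"
        using a Wvec_mod[OF v(1)] by (simp add: v'_def mod_add_left_eq fun_eq_iff)
      ultimately show "\<exists>s. (v, s) \<in> hgen p \<omega> S"
        by auto
    qed
  qed
  from this[of 0] v show ?thesis
    by simp
qed

lemma hgen_eq_HsetI:
  assumes S: "S \<subseteq> Hset p h" and center: "((\<lambda>_. 0), 1) \<in> S"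
    and echelon: "\<And>k. k < h \<Longrightarrow> \<exists>w y. (w, y) \<in> S \<and> w k = 1 \<and> (\<forall>l<k. w l = 0)"
  shows "hgen p \<omega> S = Hset p h"
proof
  show "hgen p \<omega> S \<subseteq> Hset p h"
    using hgen_subset_Hset[OF S] .
  show "Hset p h \<subseteq> hgen p \<omega> S"
  proof
    fix g assume "g \<in> Hset p h"
    then obtain v z where g: "g = (v, z)" "v \<in> Wvec p h" "0 \<le> z" "z < int p"
      by (auto simp: Hset_def)
    obtain s where "(v, s) \<in> hgen p \<omega> S"
      using hgen_vectors[OF S echelon g(2)] by blast
    then show "g \<in> hgen p \<omega> S"
      using hgen_shift_center[OF S center] g by blast
  qed
qed

lemma echelon_slot_subset_Hset: "echelon_slot p h i \<subseteq> Hset p h"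
proof -
  have "echelon_vecs p h i \<subseteq> Wvec p h"
    using p_ge_3 by (auto simp: echelon_vecs_def Wvec_def tuples_def split: if_splits)
  then show ?thesis
    using zero_in_Wvec p_ge_3 by (auto simp: echelon_slot_def Hset_def)
qed

lemma echelon_tuples_subset_Vr:
  assumes "h < r"
  shows "tuples r (echelon_slot p h) hone \<subseteq> Vr p h \<omega> r"
proof
  fix g assume g: "g \<in> tuples r (echelon_slot p h) hone"
  then have g_H: "\<forall>i<r. g i \<in> Hset p h"
    using echelon_slot_subset_Hset by (auto simp: tuples_def)
  have "g h = ((\<lambda>_. 0), 1)"
    using g assms by (auto simp: tuples_def echelon_slot_def)
  then have center: "((\<lambda>_. 0), 1) \<in> g ` {..<r}"
    using assms by (metis image_eqI lessThan_iff)
  have echelon: "\<exists>w y. (w, y) \<in> g ` {..<r} \<and> w k = 1 \<and> (\<forall>l<k. w l = 0)" if k: "k < h" for k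
  proof -
    have "g k \<in> echelon_slot p h k"
      using g k assms by (auto simp: tuples_def)
    then have "g k \<in> echelon_vecs p h k \<times> {0..<int p}"
      using k by (simp add: echelon_slot_def)
    then obtain w y where wy: "g k = (w, y)" "w \<in> echelon_vecs p h k"
      by auto
    then have w: "\<forall>i<h. w i \<in> (if i < k then {0} else if i = k then {1} else {0..<int p})"
      by (simp add: echelon_vecs_def tuples_def)
    have "w k = 1"
      using w k by auto
    moreover have "\<forall>l<k. w l = 0"
    proof (intro allI impI)
      fix l assume "l < k"
      then show "w l = 0"
        using w[rule_format, of l] k by simp
    qed
    moreover have "(w, y) \<in> g ` {..<r}"
      using wy k assms by (metis image_eqI lessThan_iff less_trans)
    ultimately show ?thesis
      by blast
  qed
  have "hgen p \<omega> (g ` {..<r}) = Hset p h"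
    by (rule hgen_eq_HsetI) (use g_H center echelon in auto)
  then show "g \<in> Vr p h \<omega> r"
    using g g_H by (auto simp: Vr_def tuples_def)
qed

lemma card_Vr_ge:
  assumes "h < r"
  shows "p ^ (\<Sum>i<r. echelon_dim h i) \<le> card (Vr p h \<omega> r)"
  using card_mono[OF finite_Vr echelon_tuples_subset_Vr[OF assms]] card_echelon_tuples by simp

lemma standard_tuple_in_Vr:
  assumes "h < r"
  shows "standard_tuple h \<in> Vr p h \<omega> r"
proof -
  have "standard_tuple h \<in> tuples r (echelon_slot p h) hone"
    using assms p_pos hone_in_Hset
    by (auto simp: tuples_def standard_tuple_def echelon_slot_def echelon_vecs_def)
  then show ?thesis
    using echelon_tuples_subset_Vr[OF assms] by blast
qed

end

section \<open>Support and distance to stationarity of the walk\<close>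

definition move_labels :: "nat \<Rightarrow> nat \<Rightarrow> (nat \<times> nat \<times> nat) set" where
  "move_labels p r = {(i, j, a). i < r \<and> j < r \<and> i \<noteq> j \<and> a < p}"

lemma move_labels_subset: "move_labels p r \<subseteq> {..<r} \<times> {..<r} \<times> {..<p}"
  by (auto simp: move_labels_def)

lemma finite_move_labels: "finite (move_labels p r)"
  using move_labels_subset finite_subset by blast

lemma card_move_labels: "card (move_labels p r) = r * (r - 1) * p"
proof -
  have "move_labels p r = (SIGMA i:{..<r}. ({..<r} - {i}) \<times> {..<p})"
    by (auto simp: move_labels_def)
  also have "card \<dots> = (\<Sum>i<r. card (({..<r} - {i}) \<times> {..<p}))"
    by (rule card_SigmaI) auto
  also have "\<dots> = (\<Sum>i<r. (r - 1) * p)"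
    by (rule sum.cong) (auto simp: card_cartesian_product)
  finally show ?thesis by simp
qed

definition moves ::
  "nat \<Rightarrow> ((nat \<Rightarrow> int) \<Rightarrow> (nat \<Rightarrow> int) \<Rightarrow> int) \<Rightarrow> nat \<Rightarrow> (nat \<Rightarrow> helem) \<Rightarrow> (nat \<Rightarrow> helem) set" where
  "moves p \<omega> r z = (\<lambda>(i, j, a). TR p \<omega> j i a z) ` move_labels p r
                 \<union> (\<lambda>(i, j, a). TL p \<omega> j i a z) ` move_labels p r"

lemma finite_moves: "finite (moves p \<omega> r z)"
  by (simp add: moves_def finite_move_labels)

lemma card_moves_le: "card (moves p \<omega> r z) \<le> 2 * (r * r * p)"
proof -
  have "card (moves p \<omega> r z) \<le> card (move_labels p r) + card (move_labels p r)"
    unfolding moves_def by (intro card_Un_le[THEN order_trans] add_mono card_image_le finite_move_labels)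
  also have "\<dots> \<le> 2 * (r * r * p)"
  proof -
    have "r * (r - 1) * p \<le> r * r * p"
      by (intro mult_le_mono) auto
    then show ?thesis
      unfolding card_move_labels by linarith
  qed
  finally show ?thesis .
qed

fun reachable ::
  "nat \<Rightarrow> ((nat \<Rightarrow> int) \<Rightarrow> (nat \<Rightarrow> int) \<Rightarrow> int) \<Rightarrow> nat \<Rightarrow> (nat \<Rightarrow> helem) \<Rightarrow> nat \<Rightarrow> (nat \<Rightarrow> helem) set" where
  "reachable p \<omega> r x 0 = {x}"
| "reachable p \<omega> r x (Suc t) = reachable p \<omega> r x t \<union> \<Union> (moves p \<omega> r ` reachable p \<omega> r x t)"

lemma finite_reachable: "finite (reachable p \<omega> r x t)"
  by (induction t) (simp_all add: finite_moves)

lemma card_reachable_le: "card (reachable p \<omega> r x t) \<le> (1 + 2 * (r * r * p)) ^ t"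
proof (induction t)
  case (Suc t)
  let ?R = "reachable p \<omega> r x t" and ?b = "1 + 2 * (r * r * p)"
  have "card (reachable p \<omega> r x (Suc t)) \<le> card ?R + card (\<Union> (moves p \<omega> r ` ?R))"
    by (simp add: card_Un_le)
  also have "card (\<Union> (moves p \<omega> r ` ?R)) \<le> (\<Sum>z\<in>?R. card (moves p \<omega> r z))"
    by (rule card_UN_le[OF finite_reachable])
  also have "\<dots> \<le> (\<Sum>z\<in>?R. 2 * (r * r * p))"
    by (rule sum_mono) (rule card_moves_le)
  finally have "card (reachable p \<omega> r x (Suc t)) \<le> card ?R * ?b"
    by (simp add: algebra_simps)
  also have "\<dots> \<le> ?b ^ t * ?b"
    using Suc.IH by (intro mult_right_mono) auto
  finally show ?case by (simp add: mult.commute)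
qed simp

lemma Pker_eq_card_fibers:
  "Pker p \<omega> r z y =
     (real (card {m \<in> move_labels p r. (\<lambda>(i, j, a). TR p \<omega> j i a z) m = y})
    + real (card {m \<in> move_labels p r. (\<lambda>(i, j, a). TL p \<omega> j i a z) m = y}))
     / (2 * real p * real r * (real r - 1))"
proof -
  have fibers: "{(i, j, a). i < r \<and> j < r \<and> i \<noteq> j \<and> a < p \<and> f i j a = y}
      = {m \<in> move_labels p r. (\<lambda>(i, j, a). f i j a) m = y}" for f :: "nat \<Rightarrow> nat \<Rightarrow> nat \<Rightarrow> nat \<Rightarrow> helem"
    by (auto simp: move_labels_def)
  show ?thesis
    unfolding Pker_def fibers[of "\<lambda>i j a. TR p \<omega> j i a z"] fibers[of "\<lambda>i j a. TL p \<omega> j i a z"] ..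
qed

lemma Pker_nonneg: "0 \<le> Pker p \<omega> r z y"
  by (cases r) (simp_all add: Pker_def)

lemma Qker_nonneg: "0 \<le> Qker p \<omega> r z y"
  using Pker_nonneg[of p \<omega> r z y] by (simp add: Qker_def)

lemma Qpow_nonneg: "0 \<le> Qpow p h \<omega> r t x y"
  by (induction t arbitrary: y) (simp_all add: sum_nonneg Qker_nonneg)

lemma Qker_nonzero_imp_move:
  assumes "Qker p \<omega> r z y \<noteq> 0"
  shows "y = z \<or> y \<in> moves p \<omega> r z"
proof (rule ccontr)
  assume no_move: "\<not> (y = z \<or> y \<in> moves p \<omega> r z)"
  then have "{m \<in> move_labels p r. (\<lambda>(i, j, a). TR p \<omega> j i a z) m = y} = {}"
            "{m \<in> move_labels p r. (\<lambda>(i, j, a). TL p \<omega> j i a z) m = y} = {}"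
    by (force simp: moves_def)+
  then have "Pker p \<omega> r z y = 0"
    by (simp only: Pker_eq_card_fibers card.empty of_nat_0 add_0 div_0)
  then have "Qker p \<omega> r z y = 0"
    using no_move by (auto simp: Qker_def)
  with assms show False by contradiction
qed

lemma Qpow_nonzero_imp_reachable:
  "Qpow p h \<omega> r t x y \<noteq> 0 \<Longrightarrow> y \<in> reachable p \<omega> r x t"
proof (induction t arbitrary: y)
  case (Suc t)
  then have "(\<Sum>z\<in>Vr p h \<omega> r. Qpow p h \<omega> r t x z * Qker p \<omega> r z y) \<noteq> 0"
    by simp
  then obtain z where "Qpow p h \<omega> r t x z * Qker p \<omega> r z y \<noteq> 0"
    by (meson sum.neutral)
  then have "Qpow p h \<omega> r t x z \<noteq> 0" "Qker p \<omega> r z y \<noteq> 0"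
    by simp_all
  with Suc.IH Qker_nonzero_imp_move show ?case by fastforce
qed (simp split: if_splits)

lemma tv_dist_gt_if_concentrated:
  assumes x: "x \<in> Vr p h \<omega> r" and A: "A \<subseteq> Vr p h \<omega> r"
    and card_A: "4 * card A \<le> card (Vr p h \<omega> r)"
    and mass: "(\<Sum>y\<in>Vr p h \<omega> r - A. Qpow p h \<omega> r t x y) < 1 / 4"
  shows "1 / 4 < tv_dist p h \<omega> r t x"
proof -
  let ?V = "Vr p h \<omega> r" and ?Q = "Qpow p h \<omega> r t x"
  let ?N = "real (card ?V)"
  have N: "0 < ?N"
    using x finite_Vr card_gt_0_iff by fastforce
  have "card (?V - A) = card ?V - card A"
    using A finite_Vr finite_subset card_Diff_subset by metis
  moreover have "4 * real (card A) \<le> ?N"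
    using card_A of_nat_le_iff[of "4 * card A" "card ?V", where 'a=real] by simp
  ultimately have "3 / 4 * ?N \<le> real (card (?V - A))"
    by (simp add: of_nat_diff)
  then have "3 / 4 \<le> (\<Sum>y\<in>?V - A. 1 / ?N)"
    using N by (simp add: le_divide_eq)
  also have "\<dots> \<le> (\<Sum>y\<in>?V - A. \<bar>?Q y - 1 / ?N\<bar> + ?Q y)"
    by (rule sum_mono) linarith
  also have "\<dots> \<le> (\<Sum>y\<in>?V. \<bar>?Q y - 1 / ?N\<bar>) + (\<Sum>y\<in>?V - A. ?Q y)"
    by (simp add: sum.distrib sum_mono2 finite_Vr)
  finally show ?thesis
    using mass by (simp add: tv_dist_def)
qed

lemma mix_time_geI:
  assumes "\<And>t. \<forall>x\<in>Vr p h \<omega> r. tv_dist p h \<omega> r t x \<le> 1 / 4 \<Longrightarrow> c \<le> real t"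
  shows "ereal c \<le> mix_time p h \<omega> r"
  unfolding mix_time_def
proof (rule Inf_greatest)
  fix s assume "s \<in> {ereal (real t) |t. \<forall>x\<in>Vr p h \<omega> r. tv_dist p h \<omega> r t x \<le> 1 / 4}"
  then obtain t where "s = ereal (real t)" and "\<forall>x\<in>Vr p h \<omega> r. tv_dist p h \<omega> r t x \<le> 1 / 4"
    by blast
  then show "ereal c \<le> s"
    using assms by simp
qed

section \<open>Growth of the number of nontrivial entries\<close>

definition nontrivial_count :: "nat \<Rightarrow> (nat \<Rightarrow> helem) \<Rightarrow> nat" where
  "nontrivial_count r y = card {i. i < r \<and> y i \<noteq> hone}"

lemma nontrivial_count_fun_upd_le:
  "nontrivial_count r (z(i := v)) \<le> Suc (nontrivial_count r z)"
proof -
  have "{k. k < r \<and> (z(i := v)) k \<noteq> hone} \<subseteq> insert i {k. k < r \<and> z k \<noteq> hone}"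
    by auto
  then have "card {k. k < r \<and> (z(i := v)) k \<noteq> hone} \<le> card (insert i {k. k < r \<and> z k \<noteq> hone})"
    by (intro card_mono) auto
  also have "\<dots> \<le> Suc (card {k. k < r \<and> z k \<noteq> hone})"
    by (rule card_insert_le_m1) auto
  finally show ?thesis by (simp add: nontrivial_count_def)
qed

lemma sum_nontrivial_indicator: "(\<Sum>j<r. of_bool (z j \<noteq> hone) :: real) = real (nontrivial_count r z)"
proof -
  have "{..<r} \<inter> {j. z j \<noteq> hone} = {j. j < r \<and> z j \<noteq> hone}"
    by auto
  then show ?thesis
    by (simp add: nontrivial_count_def)
qed

lemma sum_card_fiber_le:
  fixes g :: "'b \<Rightarrow> real"
  assumes "finite M" "finite V" "\<And>y. 0 \<le> g y"
  shows "(\<Sum>y\<in>V. real (card {m \<in> M. f m = y}) * g y) \<le> (\<Sum>m\<in>M. g (f m))"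
proof -
  let ?S = "{m \<in> M. f m \<in> V}"
  have "(\<Sum>y\<in>V. real (card {m \<in> M. f m = y}) * g y) = (\<Sum>y\<in>V. \<Sum>m\<in>{m \<in> ?S. f m = y}. g (f m))"
  proof (rule sum.cong)
    fix y assume "y \<in> V"
    then have "{m \<in> ?S. f m = y} = {m \<in> M. f m = y}" by auto
    then show "real (card {m \<in> M. f m = y}) * g y = (\<Sum>m\<in>{m \<in> ?S. f m = y}. g (f m))"
      by simp
  qed simp
  also have "\<dots> = (\<Sum>m\<in>?S. g (f m))"
    by (rule sum.group) (use assms in auto)
  also have "\<dots> \<le> (\<Sum>m\<in>M. g (f m))"
    by (rule sum_mono2) (use assms in auto)
  finally show ?thesis .
qed

lemma sum_move_labels_source_le:
  fixes F :: "nat \<Rightarrow> real"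
  assumes "\<And>j. 0 \<le> F j"
  shows "(\<Sum>m\<in>move_labels p r. F (fst (snd m))) \<le> real r * real p * (\<Sum>j<r. F j)"
proof -
  have "(\<Sum>m\<in>move_labels p r. F (fst (snd m))) \<le> (\<Sum>m\<in>{..<r} \<times> {..<r} \<times> {..<p}. F (fst (snd m)))"
    by (rule sum_mono2) (use move_labels_subset assms in auto)
  also have "\<dots> = (\<Sum>(i, ja)\<in>{..<r} \<times> ({..<r} \<times> {..<p}). F (fst ja))"
    by (rule sum.cong) auto
  also have "\<dots> = (\<Sum>i<r. \<Sum>ja\<in>{..<r} \<times> {..<p}. F (fst ja))"
    by (rule sum.cartesian_product[symmetric])
  also have "\<dots> = (\<Sum>i<r. \<Sum>(j, a)\<in>{..<r} \<times> {..<p}. F j)"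
    by (rule sum.cong) (auto intro: sum.cong)
  also have "\<dots> = (\<Sum>i<r. \<Sum>j<r. \<Sum>a<p. F j)"
    by (rule sum.cong) (simp_all only: sum.cartesian_product)
  also have "\<dots> = real r * real p * (\<Sum>j<r. F j)"
    by (simp add: sum_distrib_left mult.assoc)
  finally show ?thesis .
qed

lemma sum_nontrivial_count_moves_le:
  assumes "\<And>i j a. i < r \<Longrightarrow>
    nontrivial_count r (f (i, j, a)) \<le> nontrivial_count r z + of_bool (z j \<noteq> hone)"
  shows "(\<Sum>m\<in>move_labels p r. real (nontrivial_count r (f m)))
    \<le> real (nontrivial_count r z) * (real (card (move_labels p r)) + real r * real p)"
proof -
  let ?F = "\<lambda>j. of_bool (z j \<noteq> hone) :: real"
  have "(\<Sum>m\<in>move_labels p r. real (nontrivial_count r (f m)))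
      \<le> (\<Sum>m\<in>move_labels p r. real (nontrivial_count r z) + ?F (fst (snd m)))"
  proof (rule sum_mono)
    fix m assume "m \<in> move_labels p r"
    then obtain i j a where m: "m = (i, j, a)" "i < r"
      by (auto simp: move_labels_def)
    then have "real (nontrivial_count r (f m)) \<le> real (nontrivial_count r z + of_bool (z j \<noteq> hone))"
      using assms by (simp only: of_nat_le_iff)
    then show "real (nontrivial_count r (f m)) \<le> real (nontrivial_count r z) + ?F (fst (snd m))"
      using m by simp
  qed
  also have "\<dots> = real (card (move_labels p r)) * real (nontrivial_count r z)
                 + (\<Sum>m\<in>move_labels p r. ?F (fst (snd m)))"
    by (simp add: sum.distrib)
  also have "(\<Sum>m\<in>move_labels p r. ?F (fst (snd m))) \<le> real r * real p * (\<Sum>j<r. ?F j)"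
    by (rule sum_move_labels_source_le) simp
  also have "(\<Sum>j<r. ?F j) = real (nontrivial_count r z)"
    by (rule sum_nontrivial_indicator)
  finally show ?thesis
    by (simp add: algebra_simps)
qed

lemma nontrivial_count_standard_tuple: "nontrivial_count r (standard_tuple h) \<le> h + 1"
proof -
  have "{i. i < r \<and> standard_tuple h i \<noteq> hone} \<subseteq> {..h}"
    by (auto simp: standard_tuple_def split: if_splits)
  then show ?thesis
    unfolding nontrivial_count_def using card_mono[of "{..h}"] by fastforce
qed

context heisenberg
begin

lemma move_nontrivial_count_le:
  assumes z: "\<forall>k<r. z k \<in> Hset p h" and i: "i < r"
  shows "nontrivial_count r (TR p \<omega> j i a z) \<le> nontrivial_count r z + of_bool (z j \<noteq> hone)
       \<and> nontrivial_count r (TL p \<omega> j i a z) \<le> nontrivial_count r z + of_bool (z j \<noteq> hone)"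
proof (cases "z j = hone")
  case True
  then have "TR p \<omega> j i a z = z" "TL p \<omega> j i a z = z"
    using z i by (simp_all add: TR_def TL_def hpow_hone hmul_hone)
  then show ?thesis
    by simp
next
  case False
  then show ?thesis
    by (simp add: TR_def TL_def nontrivial_count_fun_upd_le)
qed

lemma Pker_weighted_nontrivial_le:
  assumes z: "z \<in> Vr p h \<omega> r" and r: "2 \<le> r"
  shows "(\<Sum>y\<in>Vr p h \<omega> r. Pker p \<omega> r z y * real (nontrivial_count r y))
    \<le> real (nontrivial_count r z) * (1 + 1 / (real r - 1))"
proof -
  let ?V = "Vr p h \<omega> r" and ?M = "move_labels p r"
  let ?fR = "\<lambda>(i, j, a). TR p \<omega> j i a z" and ?fL = "\<lambda>(i, j, a). TL p \<omega> j i a z"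
  let ?D = "2 * real p * real r * (real r - 1)" and ?g = "\<lambda>y. real (nontrivial_count r y)"
  have z_H: "\<forall>k<r. z k \<in> Hset p h"
    using z by (auto simp: Vr_def)
  have D_pos: "0 < ?D"
    using r p_pos by auto
  have "(\<Sum>y\<in>?V. Pker p \<omega> r z y * ?g y)
      = ((\<Sum>y\<in>?V. real (card {m \<in> ?M. ?fR m = y}) * ?g y)
        + (\<Sum>y\<in>?V. real (card {m \<in> ?M. ?fL m = y}) * ?g y)) / ?D"
    unfolding Pker_eq_card_fibers
    by (simp add: sum_divide_distrib[symmetric] sum.distrib[symmetric] algebra_simps)
  also have "\<dots> \<le> ((\<Sum>m\<in>?M. ?g (?fR m)) + (\<Sum>m\<in>?M. ?g (?fL m))) / ?D"
    using D_pos by (intro divide_right_mono add_mono sum_card_fiber_le finite_move_labels finite_Vr) auto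
  also have "\<dots> \<le> 2 * (?g z * (real (card ?M) + real r * real p)) / ?D"
  proof -
    have "(\<Sum>m\<in>?M. ?g (?fR m)) \<le> ?g z * (real (card ?M) + real r * real p)"
         "(\<Sum>m\<in>?M. ?g (?fL m)) \<le> ?g z * (real (card ?M) + real r * real p)"
      using move_nontrivial_count_le[OF z_H] by (intro sum_nontrivial_count_moves_le; simp)+
    then show ?thesis
      using D_pos by (intro divide_right_mono) auto
  qed
  also have "\<dots> = ?g z * (1 + 1 / (real r - 1))"
  proof -
    have "1 < real r"
      using r by simp
    then show ?thesis
      using p_pos r by (simp add: card_move_labels of_nat_diff field_simps)
  qed
  finally show ?thesis .
qed

lemma Qker_weighted_nontrivial_le:
  assumes z: "z \<in> Vr p h \<omega> r" and r: "2 \<le> r"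
  shows "(\<Sum>y\<in>Vr p h \<omega> r. Qker p \<omega> r z y * real (nontrivial_count r y))
    \<le> real (nontrivial_count r z) * (1 + 1 / (2 * (real r - 1)))"
proof -
  let ?V = "Vr p h \<omega> r" and ?g = "\<lambda>y. real (nontrivial_count r y)"
  have "(\<Sum>y\<in>?V. (if z = y then 1 else 0) * ?g y) = (\<Sum>y\<in>?V. if z = y then ?g y else 0)"
    by (rule sum.cong) auto
  then have id_part: "(\<Sum>y\<in>?V. (if z = y then 1 else 0) * ?g y) = ?g z"
    using z finite_Vr by simp
  have "(\<Sum>y\<in>?V. Qker p \<omega> r z y * ?g y)
      = ((\<Sum>y\<in>?V. (if z = y then 1 else 0) * ?g y) + (\<Sum>y\<in>?V. Pker p \<omega> r z y * ?g y)) / 2"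
    unfolding Qker_def by (simp add: sum_divide_distrib[symmetric] sum.distrib[symmetric] algebra_simps)
  also have "\<dots> \<le> (?g z + ?g z * (1 + 1 / (real r - 1))) / 2"
    unfolding id_part using Pker_weighted_nontrivial_le[OF z r] by simp
  also have "\<dots> = ?g z * (1 + 1 / (2 * (real r - 1)))"
  proof -
    have "0 < real r - 1"
      using r by simp
    then show ?thesis
      by (simp add: field_simps)
  qed
  finally show ?thesis .
qed

lemma expected_nontrivial_count_le:
  assumes x: "x \<in> Vr p h \<omega> r" and r: "2 \<le> r"
  shows "(\<Sum>y\<in>Vr p h \<omega> r. Qpow p h \<omega> r t x y * real (nontrivial_count r y))
    \<le> real (nontrivial_count r x) * (1 + 1 / (2 * (real r - 1))) ^ t"
proof (induction t)
  case 0
  have "(\<Sum>y\<in>Vr p h \<omega> r. Qpow p h \<omega> r 0 x y * real (nontrivial_count r y))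
      = (\<Sum>y\<in>Vr p h \<omega> r. if x = y then real (nontrivial_count r y) else 0)"
    by (rule sum.cong) auto
  then show ?case
    using x finite_Vr by simp
next
  case (Suc t)
  let ?V = "Vr p h \<omega> r" and ?g = "\<lambda>y. real (nontrivial_count r y)"
  let ?q = "1 + 1 / (2 * (real r - 1))"
  have "(\<Sum>y\<in>?V. Qpow p h \<omega> r (Suc t) x y * ?g y)
      = (\<Sum>y\<in>?V. \<Sum>z\<in>?V. Qpow p h \<omega> r t x z * (Qker p \<omega> r z y * ?g y))"
    by (simp add: sum_distrib_right mult.assoc)
  also have "\<dots> = (\<Sum>z\<in>?V. Qpow p h \<omega> r t x z * (\<Sum>y\<in>?V. Qker p \<omega> r z y * ?g y))"
    by (subst sum.swap) (simp add: sum_distrib_left)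
  also have "\<dots> \<le> (\<Sum>z\<in>?V. Qpow p h \<omega> r t x z * (?g z * ?q))"
    by (intro sum_mono mult_left_mono Qker_weighted_nontrivial_le r Qpow_nonneg) auto
  also have "\<dots> = ?q * (\<Sum>z\<in>?V. Qpow p h \<omega> r t x z * ?g z)"
    by (simp add: sum_distrib_left algebra_simps)
  also have "\<dots> \<le> ?q * (?g x * ?q ^ t)"
    using Suc.IH r by (intro mult_left_mono) auto
  finally show ?case
    by (simp add: algebra_simps)
qed

lemma mass_many_nontrivial_le:
  assumes x: "x \<in> Vr p h \<omega> r" and r: "2 \<le> r"
  shows "(\<Sum>y\<in>{y \<in> Vr p h \<omega> r. K < nontrivial_count r y}. Qpow p h \<omega> r t x y)
    \<le> real (nontrivial_count r x) * (1 + 1 / (2 * (real r - 1))) ^ t / (real K + 1)"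
proof -
  let ?V = "Vr p h \<omega> r" and ?g = "\<lambda>y. real (nontrivial_count r y)"
  have "(\<Sum>y\<in>{y \<in> ?V. K < nontrivial_count r y}. Qpow p h \<omega> r t x y)
      \<le> (\<Sum>y\<in>{y \<in> ?V. K < nontrivial_count r y}. Qpow p h \<omega> r t x y * ?g y / (real K + 1))"
  proof (rule sum_mono)
    fix y assume "y \<in> {y \<in> ?V. K < nontrivial_count r y}"
    then have "real K + 1 \<le> ?g y"
      by simp
    then show "Qpow p h \<omega> r t x y \<le> Qpow p h \<omega> r t x y * ?g y / (real K + 1)"
      using Qpow_nonneg[of p h \<omega> r t x y] by (simp add: pos_le_divide_eq mult_left_mono)
  qed
  also have "\<dots> \<le> (\<Sum>y\<in>?V. Qpow p h \<omega> r t x y * ?g y / (real K + 1))"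
    by (rule sum_mono2) (use finite_Vr Qpow_nonneg in auto)
  also have "\<dots> \<le> real (nontrivial_count r x) * (1 + 1 / (2 * (real r - 1))) ^ t / (real K + 1)"
    unfolding sum_divide_distrib[symmetric]
    by (intro divide_right_mono expected_nontrivial_count_le x r) auto
  finally show ?thesis .
qed

lemma card_few_nontrivial_le:
  "card {y \<in> Vr p h \<omega> r. nontrivial_count r y \<le> K} \<le> 2 ^ r * (p ^ (h + 1)) ^ K"
proof -
  let ?T = "\<lambda>S. tuples r (\<lambda>i. if i \<in> S then Hset p h else {hone}) hone"
  let ?SS = "{S. S \<subseteq> {..<r} \<and> card S \<le> K}"
  have cover: "{y \<in> Vr p h \<omega> r. nontrivial_count r y \<le> K} \<subseteq> (\<Union>S\<in>?SS. ?T S)"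
  proof
    fix y assume y: "y \<in> {y \<in> Vr p h \<omega> r. nontrivial_count r y \<le> K}"
    then have "{i. i < r \<and> y i \<noteq> hone} \<in> ?SS" "y \<in> ?T {i. i < r \<and> y i \<noteq> hone}"
      by (auto simp: nontrivial_count_def Vr_def tuples_def)
    then show "y \<in> (\<Union>S\<in>?SS. ?T S)"
      by blast
  qed
  have card_T: "card (?T S) \<le> (p ^ (h + 1)) ^ K" if S: "S \<in> ?SS" for S
  proof -
    have "card (?T S) = (\<Prod>i<r. if i \<in> S then p ^ (h + 1) else 1)"
      unfolding card_tuples by (rule prod.cong) (auto simp: card_Hset)
    also have "\<dots> = (p ^ (h + 1)) ^ card S"
      using S by (simp add: prod.If_cases Int_absorb1)
    also have "\<dots> \<le> (p ^ (h + 1)) ^ K"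
      using S p_pos by (intro power_increasing) auto
    finally show ?thesis .
  qed
  have fin_SS: "finite ?SS"
    by (rule finite_subset[of _ "Pow {..<r}"]) auto
  have "card {y \<in> Vr p h \<omega> r. nontrivial_count r y \<le> K} \<le> card (\<Union>S\<in>?SS. ?T S)"
    by (rule card_mono) (use fin_SS cover in \<open>auto intro!: finite_tuples simp: finite_Hset\<close>)
  also have "\<dots> \<le> (\<Sum>S\<in>?SS. card (?T S))"
    by (rule card_UN_le[OF fin_SS])
  also have "\<dots> \<le> (\<Sum>S\<in>?SS. (p ^ (h + 1)) ^ K)"
    by (rule sum_mono) (rule card_T)
  also have "\<dots> = card ?SS * (p ^ (h + 1)) ^ K"
    by simp
  also have "\<dots> \<le> 2 ^ r * (p ^ (h + 1)) ^ K"
  proof -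
    have "card ?SS \<le> card (Pow {..<r})"
      by (rule card_mono) auto
    then show ?thesis
      by (simp add: card_Pow)
  qed
  finally show ?thesis .
qed

lemma card_half_nontrivial_le_quarter:
  assumes h: "2 \<le> h" and r: "4 * (h + 1) + 8 \<le> r"
  shows "4 * card {y \<in> Vr p h \<omega> r. nontrivial_count r y \<le> r div 2} \<le> card (Vr p h \<omega> r)"
proof -
  define K where "K = r div 2"
  define s where "s = r - h - 1 - K"
  define P where "P = p ^ (h + 1)"
  have hr: "h < r"
    using r by simp
  have s: "r - h - 1 = K + s" "r + 8 \<le> 4 * s"
    using r by (simp_all add: s_def K_def)
  have P: "27 \<le> P"
  proof -
    have "3 ^ 3 \<le> p ^ 3"
      using p_ge_3 by (intro power_mono) auto
    also have "\<dots> \<le> P"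
      using h p_pos unfolding P_def by (intro power_increasing) auto
    finally show ?thesis
      by simp
  qed
  have "4 * 2 ^ r \<le> (2 :: nat) ^ (r + 8)"
    by (simp add: power_add)
  also have "\<dots> \<le> 2 ^ (4 * s)"
    using s by (intro power_increasing) auto
  also have "\<dots> = 16 ^ s"
    by (simp add: power_mult)
  also have "\<dots> \<le> P ^ s"
    using P by (intro power_mono) auto
  finally have two_pow: "4 * 2 ^ r \<le> P ^ s" .
  have "4 * card {y \<in> Vr p h \<omega> r. nontrivial_count r y \<le> K} \<le> 4 * 2 ^ r * P ^ K"
    using card_few_nontrivial_le[of r K] by (simp add: P_def)
  also have "\<dots> \<le> P ^ s * P ^ K"
    using two_pow by simp
  also have "\<dots> = P ^ (r - h - 1)"
    using s by (simp add: power_add mult.commute)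
  also have "\<dots> = p ^ ((h + 1) * (r - h - 1))"
    unfolding P_def by (rule power_mult[symmetric])
  also have "\<dots> \<le> p ^ (\<Sum>i<r. echelon_dim h i)"
    using sum_echelon_dim_ge(1)[OF hr] p_pos by (intro power_increasing) auto
  also have "\<dots> \<le> card (Vr p h \<omega> r)"
    by (rule card_Vr_ge[OF hr])
  finally show ?thesis
    by (simp add: K_def)
qed

end

lemma ln_ge_two_thirds:
  fixes x :: real
  assumes "3 \<le> x"
  shows "2 / 3 \<le> ln x"
proof -
  have "ln (1 / x) \<le> 1 / x - 1"
    using assms by (intro ln_le_minus_one) auto
  then have "1 - 1 / x \<le> ln x"
    using assms by (simp add: ln_div)
  moreover have "1 / x \<le> 1 / 3"
    using assms by (simp add: field_simps)
  ultimately show ?thesis by linarith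
qed

lemma ln_moves_le:
  fixes p r :: nat
  assumes "0 < p" "0 < r"
  shows "ln (real (1 + 2 * (r * r * p))) \<le> (ln (3 * real p) + 2) * ln (exp 1 * real r)"
proof -
  have "1 \<le> r * r * p"
    using assms by simp
  then have "real (1 + 2 * (r * r * p)) \<le> real (3 * (r * r * p))"
    by (simp only: of_nat_le_iff)
  also have "\<dots> = 3 * real p * real r ^ 2"
    by (simp add: power2_eq_square ac_simps)
  finally have "ln (real (1 + 2 * (r * r * p))) \<le> ln (3 * real p * real r ^ 2)"
    by (intro ln_mono) (auto simp: add_pos_nonneg)
  also have "\<dots> = ln (3 * real p) + 2 * ln (real r)"
    using assms by (simp add: ln_mult ln_realpow)
  also have "\<dots> \<le> (ln (3 * real p) + 2) * (1 + ln (real r))"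
  proof -
    have "0 \<le> ln (3 * real p) * ln (real r)"
      using assms by simp
    then show ?thesis
      by (simp add: algebra_simps)
  qed
  also have "\<dots> = (ln (3 * real p) + 2) * ln (exp 1 * real r)"
    using assms by (simp add: ln_mult)
  finally show ?thesis .
qed

lemma ln_mul_one_plus_ln_le:
  fixes r H :: real
  assumes r: "12 ^ 8 \<le> r" and H: "0 \<le> H" "r < H ^ 2"
  shows "ln r * (1 + ln r) \<le> H"
proof -
  define u where "u = r powr (1 / 8)"
  have r_pos: "0 < r"
    using r by simp
  have u_pow: "u ^ 8 = r"
  proof -
    have "u ^ 8 = r powr (of_nat 8 * (1 / 8))"
      unfolding u_def using r_pos by (intro powr_power) auto
    then show ?thesis
      using r_pos by simp
  qed
  have u_ge: "12 \<le> u"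
  proof -
    have "(12 ^ 8 :: real) powr (1 / 8) \<le> u"
      unfolding u_def using r by (intro powr_mono2) auto
    moreover have "(12 ^ 8 :: real) powr (1 / 8) = 12"
      by (simp add: powr_powr[of 12 8 "1/8", unfolded powr_numeral] flip: powr_numeral)
    ultimately show ?thesis by simp
  qed
  have "ln r \<le> 8 * u"
    using ln_powr_bound[of r "1 / 8"] r by (simp add: u_def)
  moreover have "0 \<le> ln r"
    using r by simp
  ultimately have "ln r * (1 + ln r) \<le> (8 * u) * (9 * u)"
    using u_ge by (intro mult_mono) auto
  also have "\<dots> = 72 * u ^ 2"
    by (simp add: power2_eq_square)
  also have "\<dots> \<le> u ^ 2 * u ^ 2"
  proof -
    have "72 \<le> u ^ 2"
      using u_ge mult_mono[of 12 u 12 u] by (simp add: power2_eq_square)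
    then show ?thesis
      by (intro mult_right_mono) auto
  qed
  also have "\<dots> \<le> H"
  proof -
    have "(u ^ 2 * u ^ 2) ^ 2 < H ^ 2"
      using u_pow H by (simp flip: power_add power_mult)
    then show ?thesis
      using H(1) power_less_imp_less_base by fastforce
  qed
  finally show ?thesis .
qed

lemma mul_ln_le_covering_rate:
  fixes r H :: real
  assumes r: "12 ^ 8 \<le> r" and H: "0 \<le> H" "r < H ^ 2"
  shows "r * ln r \<le> r * H / ln (exp 1 * r)"
proof -
  have pos: "0 < 1 + ln r"
    using r by (simp add: add_pos_nonneg)
  have "ln r \<le> H / (1 + ln r)"
    using ln_mul_one_plus_ln_le[OF r H] pos by (simp add: field_simps)
  then have "r * ln r \<le> r * (H / (1 + ln r))"
    using r by (intro mult_left_mono) auto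
  moreover have "ln (exp 1 * r) = 1 + ln r"
    using r by (simp add: ln_mult)
  ultimately show ?thesis
    by simp
qed

lemma add_four_mul_le_of_square_le:
  fixes h r :: nat
  assumes r: "12 ^ 8 \<le> r" and sq: "(h + 1) ^ 2 \<le> r"
  shows "4 * (h + 1) + 8 \<le> r"
proof (cases "8 \<le> h + 1")
  case True
  then have "4 * (h + 1) + 8 \<le> 8 * (h + 1)"
    by simp
  also have "\<dots> \<le> (h + 1) * (h + 1)"
    by (rule mult_le_mono1[OF True])
  also have "\<dots> \<le> r"
    using sq by (simp add: power2_eq_square)
  finally show ?thesis .
qed (use r in simp)

lemma lazy_growth_pow_le:
  fixes r :: real
  assumes r: "2 \<le> r" and t: "real t < r * ln r / 32"
  shows "(1 + 1 / (2 * (r - 1))) ^ t \<le> exp (ln r / 32)"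
proof -
  define a where "a = 1 / (2 * (r - 1))"
  have "(1 + a) ^ t \<le> exp a ^ t"
    using exp_ge_add_one_self[of a] r by (intro power_mono) (auto simp: a_def)
  also have "\<dots> = exp (real t * a)"
    by (simp add: exp_of_nat_mult)
  also have "\<dots> \<le> exp (ln r / 32)"
  proof -
    have "a \<le> 1 / r"
      using r by (simp add: a_def field_simps)
    then have "real t * a \<le> real t / r"
      by (simp add: mult_left_mono divide_inverse)
    also have "\<dots> \<le> ln r / 32"
      using t r by (simp add: field_simps)
    finally show ?thesis by simp
  qed
  finally show ?thesis
    by (simp add: a_def)
qed

lemma mul_exp_ln_le:
  fixes r H :: real
  assumes r: "12 ^ 8 \<le> r" and H: "0 < H" "H ^ 2 \<le> r"
  shows "8 * H * exp (ln r / 32) \<le> r"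
proof -
  have r_pos: "0 < r"
    using r by simp
  have "ln (H ^ 2) \<le> ln r"
    using H by (intro ln_mono) auto
  then have "2 * ln H \<le> ln r"
    using H by (simp add: ln_realpow)
  moreover have "32 * ln 8 \<le> 15 * ln r"
  proof -
    have "(8 :: real) ^ 32 \<le> (12 ^ 8) ^ 15"
      by simp
    also have "\<dots> \<le> r ^ 15"
      using r by (intro power_mono) auto
    finally have "ln ((8 :: real) ^ 32) \<le> ln (r ^ 15)"
      by (intro ln_mono) auto
    then show ?thesis
      using r_pos ln_realpow[of "8 :: real" 32] ln_realpow[of r 15] by simp
  qed
  ultimately have "ln (8 * H * exp (ln r / 32)) \<le> ln r"
    using H by (simp add: ln_mult)
  then show ?thesis
    using H r_pos by simp
qed

lemma infection_growth_le:
  fixes r h :: nat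
  assumes r: "12 ^ 8 \<le> r" and sq: "(h + 1) ^ 2 \<le> r" and t: "real t < real r * ln (real r) / 32"
  shows "8 * (real h + 1) * (1 + 1 / (2 * (real r - 1))) ^ t \<le> real r"
proof -
  have r_real: "12 ^ 8 \<le> real r"
    using r by (metis of_nat_le_iff of_nat_numeral of_nat_power)
  have "real ((h + 1) ^ 2) \<le> real r"
    using sq by (simp only: of_nat_le_iff)
  then have sq_real: "(real h + 1) ^ 2 \<le> real r"
    by (simp add: add.commute)
  have "8 * (real h + 1) * (1 + 1 / (2 * (real r - 1))) ^ t
      \<le> 8 * (real h + 1) * exp (ln (real r) / 32)"
    using r_real t by (intro mult_left_mono lazy_growth_pow_le) auto
  also have "\<dots> \<le> real r"
    using r_real sq_real by (intro mul_exp_ln_le) auto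
  finally show ?thesis .
qed

section \<open>The two lower bounds\<close>

lemma two_thirds_sum_echelon_dim_ge:
  assumes hr: "h < r" and r: "16 \<le> r"
  shows "2 + real r * (real h + 1) / 16 \<le> 2 / 3 * real (\<Sum>i<r. echelon_dim h i)"
proof -
  define H where "H = real h + 1"
  define E where "E = (\<Sum>i<r. echelon_dim h i)"
  have "real ((h + 1) * (r - 1)) = real r * H - H"
    unfolding of_nat_mult using r by (simp add: H_def of_nat_diff algebra_simps)
  moreover have "real ((h + 1) * (r - 1)) \<le> real (2 * E)"
    using sum_echelon_dim_ge(2)[OF hr] unfolding E_def of_nat_le_iff .
  ultimately have "real r * H - H \<le> 2 * real E"
    by simp
  moreover have "16 * H \<le> real r * H"
    using r by (intro mult_right_mono) (auto simp: H_def)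
  moreover have "1 \<le> H"
    by (simp add: H_def)
  ultimately show ?thesis
    unfolding H_def[symmetric] E_def[symmetric] by linarith
qed

context heisenberg
begin

lemma reachable_bound_lt_card:
  assumes hr: "h < r" and r: "16 \<le> r"
    and t: "real t * (16 * (ln (3 * real p) + 2)) < real r * (real h + 1) / ln (exp 1 * real r)"
  shows "4 * (1 + 2 * (r * r * p)) ^ t < p ^ (\<Sum>i<r. echelon_dim h i)"
proof -
  define b where "b = 1 + 2 * (r * r * p)"
  define E where "E = (\<Sum>i<r. echelon_dim h i)"
  have b_pos: "0 < real b"
    by (simp add: b_def add_pos_nonneg)
  have L_pos: "0 < ln (exp 1 * real r)"
    using r by (simp add: ln_mult add_pos_nonneg)
  have "real t * ln (real b) \<le> real t * ((ln (3 * real p) + 2) * ln (exp 1 * real r))"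
    unfolding b_def using ln_moves_le p_pos r by (intro mult_left_mono) auto
  also have "\<dots> = real t * (16 * (ln (3 * real p) + 2)) * ln (exp 1 * real r) / 16"
    by simp
  also have "\<dots> < real r * (real h + 1) / 16"
  proof -
    have "real t * (16 * (ln (3 * real p) + 2)) * ln (exp 1 * real r) < real r * (real h + 1)"
      using t L_pos by (simp add: pos_less_divide_eq)
    then show ?thesis
      by simp
  qed
  finally have t_ln_b: "real t * ln (real b) < real r * (real h + 1) / 16" .
  have "ln (4 * real b ^ t) = 2 * ln 2 + real t * ln (real b)"
    using b_pos ln_realpow[of "2 :: real" 2] by (simp add: ln_mult ln_realpow)
  also have "\<dots> < 2 + real r * (real h + 1) / 16"
    using ln_2_less_1 t_ln_b by linarith
  also have "\<dots> \<le> 2 / 3 * real E"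
    unfolding E_def by (rule two_thirds_sum_echelon_dim_ge[OF hr r])
  also have "\<dots> \<le> ln (real p) * real E"
    using ln_ge_two_thirds[of "real p"] p_ge_3 by (intro mult_right_mono) auto
  also have "\<dots> = ln (real p ^ E)"
    using p_pos by (simp add: ln_realpow mult.commute)
  finally have "real (4 * b ^ t) < real (p ^ E)"
    using b_pos p_pos by simp
  then show ?thesis
    unfolding b_def E_def of_nat_less_iff .
qed

lemma tv_far_before_covering:
  assumes x: "x \<in> Vr p h \<omega> r" and hr: "h < r" and r: "16 \<le> r"
    and t: "real t * (16 * (ln (3 * real p) + 2)) < real r * (real h + 1) / ln (exp 1 * real r)"
  shows "1 / 4 < tv_dist p h \<omega> r t x"
proof -
  let ?R = "reachable p \<omega> r x t \<inter> Vr p h \<omega> r"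
  have "card ?R \<le> card (reachable p \<omega> r x t)"
    by (rule card_mono[OF finite_reachable]) blast
  also have "\<dots> \<le> (1 + 2 * (r * r * p)) ^ t"
    by (rule card_reachable_le)
  finally have "4 * card ?R \<le> card (Vr p h \<omega> r)"
    using reachable_bound_lt_card[OF hr r t] card_Vr_ge[OF hr] by linarith
  moreover have "(\<Sum>y\<in>Vr p h \<omega> r - ?R. Qpow p h \<omega> r t x y) = 0"
    using Qpow_nonzero_imp_reachable by (intro sum.neutral) blast
  ultimately show ?thesis
    by (intro tv_dist_gt_if_concentrated[OF x]) auto
qed

lemma tv_far_before_infection:
  assumes h: "2 \<le> h" and r: "12 ^ 8 \<le> r" and sq: "(h + 1) ^ 2 \<le> r"
    and t: "real t < real r * ln (real r) / 32"
  shows "1 / 4 < tv_dist p h \<omega> r t (standard_tuple h)"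
proof -
  define K where "K = r div 2"
  define A where "A = {y \<in> Vr p h \<omega> r. nontrivial_count r y \<le> K}"
  define q where "q = 1 + 1 / (2 * (real r - 1))"
  have big: "4 * (h + 1) + 8 \<le> r"
    by (rule add_four_mul_le_of_square_le[OF r sq])
  have hr: "h < r"
    using big by simp
  have x: "standard_tuple h \<in> Vr p h \<omega> r"
    by (rule standard_tuple_in_Vr[OF hr])
  have q: "0 \<le> q"
    using r by (simp add: q_def)
  have "Vr p h \<omega> r - A = {y \<in> Vr p h \<omega> r. K < nontrivial_count r y}"
    by (auto simp: A_def)
  then have "(\<Sum>y\<in>Vr p h \<omega> r - A. Qpow p h \<omega> r t (standard_tuple h) y)
      \<le> real (nontrivial_count r (standard_tuple h)) * q ^ t / (real K + 1)"
    using mass_many_nontrivial_le[OF x] r by (simp add: q_def)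
  also have "\<dots> \<le> (real h + 1) * q ^ t / (real K + 1)"
  proof -
    have "real (nontrivial_count r (standard_tuple h)) \<le> real (h + 1)"
      by (simp only: of_nat_le_iff nontrivial_count_standard_tuple)
    then show ?thesis
      using q by (intro divide_right_mono mult_right_mono) auto
  qed
  also have "\<dots> < 1 / 4"
  proof -
    have "8 * (real h + 1) * q ^ t \<le> real r"
      unfolding q_def by (rule infection_growth_le[OF r sq t])
    moreover have "real r / 2 < real K + 1"
      unfolding K_def by linarith
    ultimately show ?thesis
      by (simp add: field_simps)
  qed
  finally have "(\<Sum>y\<in>Vr p h \<omega> r - A. Qpow p h \<omega> r t (standard_tuple h) y) < 1 / 4" .
  moreover have "4 * card A \<le> card (Vr p h \<omega> r)"
    unfolding A_def K_def by (rule card_half_nontrivial_le_quarter[OF h big])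
  ultimately show ?thesis
    by (intro tv_dist_gt_if_concentrated[OF x]) (auto simp: A_def)
qed

lemma mix_time_lower_bound:
  assumes h: "2 \<le> h" and hr: "h < r" and r: "12 ^ 8 \<le> r"
  shows "ereal (1 / (16 * (ln (3 * real p) + 2)) *
           max (real r * ln (real r)) (real r * (real h + 1) / ln (exp 1 * real r)))
         \<le> mix_time p h \<omega> r"
proof (rule mix_time_geI)
  fix t assume mixed: "\<forall>x\<in>Vr p h \<omega> r. tv_dist p h \<omega> r t x \<le> 1 / 4"
  define D where "D = ln (3 * real p) + 2"
  define A1 where "A1 = real r * ln (real r)"
  define A2 where "A2 = real r * (real h + 1) / ln (exp 1 * real r)"
  have r_real: "12 ^ 8 \<le> real r"
    using r by (metis of_nat_le_iff of_nat_numeral of_nat_power)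
  have D: "2 \<le> D"
    using p_pos by (simp add: D_def)
  have A1: "0 \<le> A1"
    using r_real by (simp add: A1_def)
  have not_far: "\<not> 1 / 4 < tv_dist p h \<omega> r t (standard_tuple h)"
    using mixed standard_tuple_in_Vr[OF hr] by fastforce
  have "16 \<le> r"
    using r by simp
  then have "\<not> real t * (16 * D) < A2"
    using tv_far_before_covering[OF standard_tuple_in_Vr[OF hr] hr] not_far
    unfolding A2_def D_def by blast
  then have "A2 \<le> real t * (16 * D)"
    by simp
  then have by_A2: "A2 / (16 * D) \<le> real t"
    using D by (simp add: field_simps)
  have by_A1: "A1 / (16 * D) \<le> real t"
  proof (cases "(h + 1) ^ 2 \<le> r")
    case True
    then have "\<not> real t < A1 / 32"
      using tv_far_before_infection[OF h r True] not_far unfolding A1_def by blast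
    then have "A1 / 32 \<le> real t"
      by simp
    moreover have "A1 / (16 * D) \<le> A1 / 32"
      using D A1 by (intro divide_left_mono) auto
    ultimately show ?thesis
      by linarith
  next
    case False
    have "real r < real ((h + 1) ^ 2)"
      using False by (simp only: of_nat_less_iff not_le)
    then have "real r < (real h + 1) ^ 2"
      by (simp add: add.commute)
    then have "A1 \<le> A2"
      unfolding A1_def A2_def using r_real by (intro mul_ln_le_covering_rate) auto
    then have "A1 / (16 * D) \<le> A2 / (16 * D)"
      using D by (intro divide_right_mono) auto
    then show ?thesis
      using by_A2 by linarith
  qed
  from by_A1 by_A2 show "1 / (16 * (ln (3 * real p) + 2)) *
      max (real r * ln (real r)) (real r * (real h + 1) / ln (exp 1 * real r)) \<le> real t"
    unfolding A1_def A2_def D_def by (simp add: max_def)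
qed

end

theorem theorem4p3:
  fixes p :: nat
  assumes "prime p" and "odd p"
  shows "\<exists>c::real. c > 0 \<and> (\<exists>r0::nat.
     \<forall>m::nat. \<forall>\<omega> r. m \<ge> 1 \<longrightarrow> symplectic_form p (2*m) \<omega> \<longrightarrow>
       r \<ge> max (2*m + 1) r0 \<longrightarrow>
       mix_time p (2*m) \<omega> r \<ge>
         ereal (c * max (real r * ln (real r))
                        (real r * (real (2*m) + 1) / ln (exp 1 * real r))))"
proof -
  define c where "c = 1 / (16 * (ln (3 * real p) + 2))"
  have "0 < c"
    using prime_gt_0_nat[OF assms(1)] by (simp add: c_def add_nonneg_pos)
  moreover have "\<forall>m::nat. \<forall>\<omega> r. m \<ge> 1 \<longrightarrow> symplectic_form p (2*m) \<omega> \<longrightarrow>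
       r \<ge> max (2*m + 1) (12 ^ 8) \<longrightarrow>
       mix_time p (2*m) \<omega> r \<ge>
         ereal (c * max (real r * ln (real r))
                        (real r * (real (2*m) + 1) / ln (exp 1 * real r)))"
  proof (intro allI impI)
    fix m :: nat and \<omega> r
    assume m: "m \<ge> 1" and \<omega>: "symplectic_form p (2*m) \<omega>" and r: "r \<ge> max (2*m + 1) (12 ^ 8)"
    interpret heisenberg p "2*m" \<omega>
      using assms \<omega> by unfold_locales
    show "mix_time p (2*m) \<omega> r \<ge>
         ereal (c * max (real r * ln (real r))
                        (real r * (real (2*m) + 1) / ln (exp 1 * real r)))"
      unfolding c_def using m r by (intro mix_time_lower_bound) auto
  qed
  ultimately show ?thesis
    by blast
qed

end
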